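(* Let $n\ge 2$ be an integer and write $n=\sum_{i=r}^{k}a_i2^i$ with $a_r,a_{r+1},\dots,a_k\in\{0,1\}$ and $a_r=a_k=1$. (i) If $n$ is odd, then a permutation in $S_n$ of type $x(n)$ is an odd permutation if and only if $\sum_{i=1}^{k}a_i\equiv 1\pmod 2$. (ii) If $n$ is even, then a permutation of type $x(n)$ and a permutation of type $y(n)$ are both odd permutations if and only if $\sum_{i=r}^{k}a_i\equiv 1\pmod 2$ and $r\geq 2$ is even.
   Context: The type of a permutation is the partition of $n$ given by the lengths of the cycles (including fixed points) in its disjoint cycle decomposition. If $n=\sum_{i=1}^{t}2^{n_i}$ with $0\le n_1<n_2<\dots<n_t$ is the binary expansion of $n$, then $x(n)$ is the partition $(2^{n_t},\dots,2^{n_1})$. If $n$ is even and $n-2=\sum_{i=1}^{\ell}2^{m_i}$ with $0<m_1<\dots<m_\ell$ is the binary expansion of $n-2$, then $y(n)$ is the partition $(2^{m_\ell},\dots,2^{m_1},1,1)$. *)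

theory Defs
  imports "HOL-Combinatorics.Combinatorics" "HOL-Library.Multiset"
begin

definition bdigit :: "nat \<Rightarrow> nat \<Rightarrow> nat" where
  "bdigit n i = (n div 2 ^ i) mod 2"

text \<open>Cycle type of a permutation p of {1..n}: multiset of the sizes of its cycles
  (orbits), fixed points included (they have orbit of size 1).\<close>
definition cycle_type :: "nat \<Rightarrow> (nat \<Rightarrow> nat) \<Rightarrow> nat multiset" where
  "cycle_type n p = image_mset card (mset_set ((\<lambda>x. orbit p x) ` {1..n}))"

definition xpart :: "nat \<Rightarrow> nat multiset" where
  "xpart n = image_mset (\<lambda>i. 2 ^ i) (mset_set {i. bdigit n i = 1})"

definition ypart :: "nat \<Rightarrow> nat multiset" where
  "ypart n = xpart (n - 2) + {#1, 1#}"

end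

(*
  A permutation of {1..n} with c cycles (fixed points included) is a product of n - c
  transpositions, so it is odd iff n + c is odd. A permutation of type x(n) has s(n)
  cycles, where s is the binary digit sum, and one of type y(n) has s(n - 2) + 2 cycles.
  If n is even and its lowest binary digit 1 sits at position r, then subtracting 2 clears
  that digit and sets the digits at positions 1, ..., r - 1, so s(n - 2) + 2 = s(n) + r.
  Both types are realised by some permutation, so the conditions on all permutations of
  a type reduce to these parities.
*)
theory Submission
  imports Defs
begin

definition ones :: "nat \<Rightarrow> nat set" where
  "ones n = {i. bdigit n i = 1}"

lemma mem_ones_iff: "i \<in> ones n \<longleftrightarrow> odd (n div 2 ^ i)"
  unfolding ones_def bdigit_def odd_iff_mod_2_eq_one mem_Collect_eq ..

lemma ones_0 [simp]: "ones 0 = {}"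
  by (simp add: ones_def bdigit_def)

lemma ones_double: "ones (2 * n) = Suc ` ones n"
proof (rule set_eqI)
  show "i \<in> ones (2 * n) \<longleftrightarrow> i \<in> Suc ` ones n" for i
    by (cases i) (auto simp: mem_ones_iff div_mult2_eq)
qed

lemma ones_Suc_double: "ones (Suc (2 * n)) = insert 0 (Suc ` ones n)"
proof (rule set_eqI)
  show "i \<in> ones (Suc (2 * n)) \<longleftrightarrow> i \<in> insert 0 (Suc ` ones n)" for i
    by (cases i) (auto simp: mem_ones_iff div_mult2_eq)
qed

lemma finite_ones: "finite (ones n)"
  by (induction n rule: nat_bit_induct) (simp_all add: ones_double ones_Suc_double)

lemma sum_ones: "(\<Sum>i\<in>ones n. 2 ^ i) = n"
proof (induction n rule: nat_bit_induct)
  case zero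
  then show ?case by simp
next
  case (even n)
  then show ?case by (simp add: ones_double sum.reindex sum_distrib_left[symmetric])
next
  case (odd n)
  have "0 \<notin> Suc ` ones n" by auto
  then show ?case
    using odd finite_ones[of n] by (simp add: ones_Suc_double sum.reindex sum_distrib_left[symmetric])
qed

lemma ones_empty_iff: "ones n = {} \<longleftrightarrow> n = 0"
  using sum_ones[of n] by auto

lemma sum_bdigit_eq_card:
  assumes "finite A"
  shows "(\<Sum>i\<in>A. bdigit n i) = card (A \<inter> ones n)"
proof -
  have "bdigit n i = (if i \<in> ones n then 1 else 0)" for i
    by (simp add: bdigit_def mem_ones_iff odd_iff_mod_2_eq_one)
  then show ?thesis
    using assms by (simp add: sum.If_cases Int_def)
qed

lemma zero_mem_ones_iff: "0 \<in> ones n \<longleftrightarrow> odd n"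
  by (simp add: mem_ones_iff)

lemma ones_diff_1:
  assumes "r \<in> ones n" "\<And>i. i < r \<Longrightarrow> i \<notin> ones n"
  shows "ones (n - 1) = (ones n - {r}) \<union> {..<r}"
  using assms
proof (induction r arbitrary: n)
  case 0
  define m where "m = n div 2"
  have "n = Suc (2 * m)"
    using 0 by (simp add: zero_mem_ones_iff m_def)
  then show ?case
    by (auto simp: ones_double ones_Suc_double)
next
  case (Suc r)
  define m where "m = n div 2"
  have n: "n = 2 * m"
    using Suc.prems(2)[of 0] by (simp add: zero_mem_ones_iff m_def)
  then have "m \<noteq> 0"
    using Suc.prems(1) by (intro notI) simp
  then have "n - 1 = Suc (2 * (m - 1))"
    using n by simp
  moreover have "ones (m - 1) = (ones m - {r}) \<union> {..<r}"
    using Suc.prems by (intro Suc.IH) (auto simp: n ones_double)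
  ultimately show ?case
    by (auto simp: n ones_double ones_Suc_double lessThan_Suc_eq_insert_0)
qed

lemma card_ones_diff_1:
  assumes "r \<in> ones n" "\<And>i. i < r \<Longrightarrow> i \<notin> ones n"
  shows "card (ones (n - 1)) + 1 = card (ones n) + r"
proof -
  have "card (ones (n - 1)) = card ((ones n - {r}) \<union> {..<r})"
    using ones_diff_1[OF assms] by simp
  also have "\<dots> = card (ones n - {r}) + r"
    using assms(2) finite_ones[of n] by (subst card_Un_disjoint) auto
  finally show ?thesis
    using card.remove[OF finite_ones assms(1)] by simp
qed

lemma card_ones_diff_2:
  assumes "even n" "r \<in> ones n" "\<And>i. i < r \<Longrightarrow> i \<notin> ones n"
  shows "card (ones (n - 2)) + 2 = card (ones n) + r"
proof -
  define m where "m = n div 2"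
  have n: "n = 2 * m"
    using assms(1) by (simp add: m_def)
  obtain s where r: "r = Suc s"
    using assms(1,2) zero_mem_ones_iff by (cases r) auto
  have "s \<in> ones m"
    using assms(2) by (auto simp: n r ones_double)
  moreover have "i \<notin> ones m" if "i < s" for i
    using assms(3)[of "Suc i"] that by (auto simp: n r ones_double)
  ultimately have "card (ones (m - 1)) + 1 = card (ones m) + s"
    by (rule card_ones_diff_1)
  moreover have "n - 2 = 2 * (m - 1)"
    using n by simp
  ultimately show ?thesis
    by (simp add: n r ones_double card_image)
qed

definition orbit_sizes :: "('a \<Rightarrow> 'a) \<Rightarrow> 'a set \<Rightarrow> nat multiset" where
  "orbit_sizes p S = image_mset card (mset_set (orbit p ` S))"

lemma cycle_type_eq_orbit_sizes: "cycle_type n p = orbit_sizes p {1..n}"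
  unfolding cycle_type_def orbit_sizes_def ..

lemma size_orbit_sizes: "size (orbit_sizes p S) = card (orbit p ` S)"
  by (simp add: orbit_sizes_def)

lemma evenperm_cycle_of_list:
  assumes "distinct cs"
  shows "evenperm (cycle_of_list cs) \<longleftrightarrow> even (length cs - 1)"
  using assms
  by (induction cs rule: cycle_of_list.induct)
    (simp_all add: evenperm_comp permutation_swap_id permutation_of_cycle evenperm_swap)

lemma orbit_cycle_of_list:
  assumes "distinct cs" "x \<in> set cs"
  shows "orbit (cycle_of_list cs) x = set cs"
proof
  show "orbit (cycle_of_list cs) x \<subseteq> set cs"
    using cycle_permutes assms(2) by (rule permutes_orbit_subset)
  show "set cs \<subseteq> orbit (cycle_of_list cs) x"
  proof
    fix y assume "y \<in> set cs"
    then obtain j where j: "j < length cs" "y = cs ! j"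
      by (auto simp: in_set_conv_nth)
    obtain i where i: "i < length cs" "x = cs ! i"
      using assms(2) by (auto simp: in_set_conv_nth)
    define k where "k = j + length cs - i"
    have "(cycle_of_list cs ^^ k) x = map (cycle_of_list cs ^^ k) cs ! i"
      using i by simp
    also have "\<dots> = cs ! ((k + i) mod length cs)"
      by (simp only: cyclic_rotation[OF assms(1)] nth_rotate[OF i(1)])
    also have "\<dots> = y"
      using i(1) j by (simp add: k_def)
    finally show "y \<in> orbit (cycle_of_list cs) x"
      unfolding orbit_altdef_permutation[OF permutation_of_cycle] by blast
  qed
qed

lemma permutes_cycle_of_list_comp:
  "p permutes I \<Longrightarrow> cycle_of_list cs \<circ> p permutes (set cs \<union> I)"
  by (rule permutes_compose) (auto intro: permutes_subset cycle_permutes)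

lemma orbit_cycle_of_list_comp_outside:
  assumes "p permutes I" "finite I" "set cs \<inter> I = {}" "x \<in> I"
  shows "orbit (cycle_of_list cs \<circ> p) x = orbit p x"
proof (rule orbit_cong)
  have "permutation p"
    using assms(1,2) permutation_permutes by blast
  then show "x \<in> orbit p x"
    by (rule permutation_self_in_orbit)
  fix z assume "z \<in> orbit p x"
  then have "p z \<in> I"
    using permutes_orbit_subset[OF assms(1,4)] permutes_in_image[OF assms(1)] by blast
  then show "(cycle_of_list cs \<circ> p) z = p z"
    using assms(3) by (auto intro: id_outside_supp)
qed

lemma orbit_cycle_of_list_comp_inside:
  assumes "p permutes I" "distinct cs" "set cs \<inter> I = {}" "x \<in> set cs"
  shows "orbit (cycle_of_list cs \<circ> p) x = set cs"
proof -
  have "orbit (cycle_of_list cs \<circ> p) x = orbit (cycle_of_list cs) x"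
  proof (rule orbit_cong)
    show "x \<in> orbit (cycle_of_list cs) x"
      using orbit_cycle_of_list[OF assms(2,4)] assms(4) by simp
    fix z assume "z \<in> orbit (cycle_of_list cs) x"
    then have "z \<notin> I"
      using orbit_cycle_of_list[OF assms(2,4)] assms(3) by blast
    then show "(cycle_of_list cs \<circ> p) z = cycle_of_list cs z"
      using assms(1) by (simp add: permutes_not_in)
  qed
  then show ?thesis
    using orbit_cycle_of_list[OF assms(2,4)] by simp
qed

lemma orbit_sizes_cycle_of_list_comp:
  assumes p: "p permutes I" "finite I" and cs: "distinct cs" "cs \<noteq> []" "set cs \<inter> I = {}"
  shows "orbit_sizes (cycle_of_list cs \<circ> p) (set cs \<union> I) = add_mset (length cs) (orbit_sizes p I)"
proof -
  let ?q = "cycle_of_list cs \<circ> p"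
  have "orbit ?q ` set cs = (\<lambda>_. set cs) ` set cs"
    using orbit_cycle_of_list_comp_inside[OF p(1) cs(1,3)] by (rule image_cong[OF refl])
  then have "orbit ?q ` set cs = {set cs}"
    using cs(2) by (simp add: image_constant_conv)
  moreover have "orbit ?q ` I = orbit p ` I"
    using orbit_cycle_of_list_comp_outside[OF p cs(3)] by (rule image_cong[OF refl])
  ultimately have orbits: "orbit ?q ` (set cs \<union> I) = insert (set cs) (orbit p ` I)"
    by (simp add: image_Un)
  have "set cs \<notin> orbit p ` I"
  proof
    assume "set cs \<in> orbit p ` I"
    then have "set cs \<subseteq> I"
      using permutes_orbit_subset[OF p(1)] by blast
    then show False
      using cs(2,3) by (simp add: Int_absorb2)
  qed
  then show ?thesis
    unfolding orbit_sizes_def orbits using p(2) by (simp add: distinct_card[OF cs(1)])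
qed

lemma cycle_decomp_permutes: "cycle_decomp S p \<Longrightarrow> p permutes S"
proof (induction rule: cycle_decomp.induct)
  case empty
  show ?case by (rule permutes_id)
next
  case comp
  show ?case by (rule permutes_cycle_of_list_comp[OF comp.IH])
qed

lemma evenperm_iff_card_orbits:
  assumes "p permutes S" "finite S"
  shows "evenperm p \<longleftrightarrow> even (card S + card (orbit p ` S))"
proof -
  have "cycle_decomp S p"
    using assms by (rule cycle_decomposition)
  then show ?thesis
    using assms(2)
  proof (induction rule: cycle_decomp.induct)
    case empty
    then show ?case by simp
  next
    case (comp I p cs)
    show ?case
    proof (cases "cs = []")
      case True
      then show ?thesis
        using comp by simp
    next
      case False
      have I: "p permutes I" "finite I"
        using comp.hyps(1) comp.prems by (simp_all add: cycle_decomp_permutes)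
      then have "permutation p"
        using permutation_permutes by blast
      have orbits: "card (orbit (cycle_of_list cs \<circ> p) ` (set cs \<union> I)) = Suc (card (orbit p ` I))"
        using arg_cong[OF orbit_sizes_cycle_of_list_comp[OF I comp.hyps(2) False comp.hyps(3)], of size]
        by (simp add: size_orbit_sizes)
      have points: "card (set cs \<union> I) = length cs + card I"
        using I(2) comp.hyps(2,3) by (simp add: card_Un_disjoint distinct_card)
      have sign: "evenperm (cycle_of_list cs \<circ> p) \<longleftrightarrow> (even (length cs - 1) \<longleftrightarrow> evenperm p)"
        using comp.hyps(2) \<open>permutation p\<close>
        by (simp add: evenperm_comp permutation_of_cycle evenperm_cycle_of_list)
      obtain a where "length cs = Suc a"
        using False by (cases cs) auto
      then show ?thesis
        unfolding orbits points sign using comp.IH[OF I(2)] by simp blast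
    qed
  qed
qed

lemma evenperm_iff_cycle_type:
  "p permutes {1..n} \<Longrightarrow> evenperm p \<longleftrightarrow> even (n + size (cycle_type n p))"
  by (simp add: evenperm_iff_card_orbits cycle_type_eq_orbit_sizes size_orbit_sizes)

lemma ex_permutes_cycle_type:
  assumes "0 \<notin># M"
  shows "\<exists>p. p permutes {1..sum_mset M} \<and> cycle_type (sum_mset M) p = M"
  using assms
proof (induction M)
  case empty
  show ?case
    by (intro exI[of _ id]) (simp add: cycle_type_eq_orbit_sizes orbit_sizes_def id_def)
next
  case (add k M)
  define m where "m = sum_mset M"
  obtain p where p: "p permutes {1..m}" "orbit_sizes p {1..m} = M"
    using add by (auto simp: m_def cycle_type_eq_orbit_sizes)
  define cs where "cs = [Suc m..<Suc (m + k)]"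
  have cs: "distinct cs" "cs \<noteq> []" "set cs \<inter> {1..m} = {}"
    using add.prems by (auto simp: cs_def)
  have dom: "{1..sum_mset (add_mset k M)} = set cs \<union> {1..m}"
    by (auto simp: cs_def m_def)
  show ?case
    unfolding cycle_type_eq_orbit_sizes dom
  proof (intro exI conjI)
    show "cycle_of_list cs \<circ> p permutes (set cs \<union> {1..m})"
      using p(1) by (rule permutes_cycle_of_list_comp)
    show "orbit_sizes (cycle_of_list cs \<circ> p) (set cs \<union> {1..m}) = add_mset k M"
      unfolding orbit_sizes_cycle_of_list_comp[OF p(1) finite_atLeastAtMost cs] p(2)
      by (simp add: cs_def)
  qed
qed

lemma xpart_eq: "xpart n = image_mset (\<lambda>i. 2 ^ i) (mset_set (ones n))"
  unfolding xpart_def ones_def ..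

lemma size_xpart: "size (xpart n) = card (ones n)"
  by (simp add: xpart_eq)

lemma sum_mset_xpart: "sum_mset (xpart n) = n"
  by (simp add: xpart_eq sum_unfold_sum_mset[symmetric] sum_ones)

lemma zero_notin_xpart: "0 \<notin># xpart n"
  by (auto simp: xpart_eq finite_ones)

lemma size_ypart: "size (ypart n) = card (ones (n - 2)) + 2"
  by (simp add: ypart_def size_xpart)

lemma sum_mset_ypart: "2 \<le> n \<Longrightarrow> sum_mset (ypart n) = n"
  by (simp add: ypart_def sum_mset_xpart)

lemma zero_notin_ypart: "0 \<notin># ypart n"
  by (simp add: ypart_def zero_notin_xpart)

lemma ex_permutes_xpart: "\<exists>p. p permutes {1..n} \<and> cycle_type n p = xpart n"
  using ex_permutes_cycle_type[OF zero_notin_xpart] by (simp add: sum_mset_xpart)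

lemma ex_permutes_ypart: "2 \<le> n \<Longrightarrow> \<exists>p. p permutes {1..n} \<and> cycle_type n p = ypart n"
  using ex_permutes_cycle_type[OF zero_notin_ypart[of n]] by (simp add: sum_mset_ypart)

lemma not_evenperm_xpart_iff:
  "p permutes {1..n} \<Longrightarrow> cycle_type n p = xpart n \<Longrightarrow> \<not> evenperm p \<longleftrightarrow> odd (n + card (ones n))"
  by (simp add: evenperm_iff_cycle_type size_xpart)

lemma not_evenperm_ypart_iff:
  "q permutes {1..n} \<Longrightarrow> cycle_type n q = ypart n \<Longrightarrow> \<not> evenperm q \<longleftrightarrow> odd (n + card (ones (n - 2)))"
  by (simp add: evenperm_iff_cycle_type size_ypart)

lemma all_odd_xpart_ypart_iff_card_ones:
  assumes "2 \<le> n"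
  shows "(\<forall>p. p permutes {1..n} \<and> cycle_type n p = xpart n \<longrightarrow> \<not> evenperm p)
      \<and> (\<forall>q. q permutes {1..n} \<and> cycle_type n q = ypart n \<longrightarrow> \<not> evenperm q)
    \<longleftrightarrow> odd (n + card (ones n)) \<and> odd (n + card (ones (n - 2)))"
  using ex_permutes_xpart[of n] ex_permutes_ypart[OF assms] not_evenperm_xpart_iff not_evenperm_ypart_iff
  by blast

lemma sum_bdigit_atLeast_Max: "(\<Sum>i\<in>{a..Max (ones n)}. bdigit n i) = card (ones n \<inter> {a..})"
proof -
  have "{a..Max (ones n)} \<inter> ones n = ones n \<inter> {a..}"
    using finite_ones[of n] by (auto intro: Max_ge)
  then show ?thesis
    by (simp add: sum_bdigit_eq_card)
qed

lemma not_evenperm_xpart_iff_digit_sum: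
  assumes "odd n" "p permutes {1..n}" "cycle_type n p = xpart n"
  shows "\<not> evenperm p \<longleftrightarrow> odd (\<Sum>i\<in>{1..Max (ones n)}. bdigit n i)"
proof -
  have "0 \<in> ones n"
    using assms(1) by (simp add: zero_mem_ones_iff)
  then have "card (ones n) = Suc (card (ones n - {0}))"
    by (rule card.remove[OF finite_ones])
  moreover have "ones n \<inter> {1..} = ones n - {0}"
    by auto
  ultimately show ?thesis
    using not_evenperm_xpart_iff[OF assms(2,3)] assms(1) by (simp add: sum_bdigit_atLeast_Max)
qed

lemma all_odd_xpart_ypart_iff_digit_sum:
  assumes "even n" "2 \<le> n" "r \<in> ones n" "\<And>i. i < r \<Longrightarrow> i \<notin> ones n"
  shows "(\<forall>p. p permutes {1..n} \<and> cycle_type n p = xpart n \<longrightarrow> \<not> evenperm p)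
      \<and> (\<forall>q. q permutes {1..n} \<and> cycle_type n q = ypart n \<longrightarrow> \<not> evenperm q)
    \<longleftrightarrow> odd (\<Sum>i\<in>{r..Max (ones n)}. bdigit n i) \<and> r \<ge> 2 \<and> even r"
proof -
  have "r \<le> i" if "i \<in> ones n" for i
    using assms(4) that by (meson leI)
  then have "ones n \<inter> {r..} = ones n"
    by auto
  then have sum: "(\<Sum>i\<in>{r..Max (ones n)}. bdigit n i) = card (ones n)"
    by (simp add: sum_bdigit_atLeast_Max)
  have digits: "even (card (ones (n - 2))) \<longleftrightarrow> (even (card (ones n)) \<longleftrightarrow> even r)"
    using arg_cong[OF card_ones_diff_2[OF assms(1,3,4)], of even] by simp
  have "r \<noteq> 0"
    using assms(1,3) by (intro notI) (simp add: zero_mem_ones_iff)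
  then have "2 \<le> r \<and> even r \<longleftrightarrow> even r"
    by presburger
  then show ?thesis
    unfolding all_odd_xpart_ypart_iff_card_ones[OF assms(2)] sum using assms(1) digits by simp blast
qed

theorem lemma4p4:
  fixes n :: nat
  assumes "n \<ge> 2"
  defines "r \<equiv> (LEAST i. bdigit n i = 1)"
  shows "(odd n \<longrightarrow>
           (\<forall>p. p permutes {1..n} \<and> cycle_type n p = xpart n \<longrightarrow>
              (\<not> evenperm p \<longleftrightarrow> odd (\<Sum>i\<in>{1..Max {i. bdigit n i = 1}}. bdigit n i))))
       \<and> (even n \<longrightarrow>
           ((\<forall>p. p permutes {1..n} \<and> cycle_type n p = xpart n \<longrightarrow> \<not> evenperm p)
            \<and> (\<forall>q. q permutes {1..n} \<and> cycle_type n q = ypart n \<longrightarrow> \<not> evenperm q)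
            \<longleftrightarrow> odd (\<Sum>i\<in>{r..Max {i. bdigit n i = 1}}. bdigit n i) \<and> r \<ge> 2 \<and> even r))"
proof -
  have r_eq: "r = (LEAST i. i \<in> ones n)"
    unfolding r_def ones_def by simp
  have "ones n \<noteq> {}"
    using assms(1) by (simp add: ones_empty_iff)
  then have r_mem: "r \<in> ones n"
    unfolding r_eq by (metis LeastI_ex ex_in_conv)
  have r_least: "i \<notin> ones n" if "i < r" for i
    using that unfolding r_eq by (rule not_less_Least)
  show ?thesis
    unfolding ones_def[symmetric]
  proof (intro conjI impI allI)
    fix p assume "odd n" and p: "p permutes {1..n} \<and> cycle_type n p = xpart n"
    then show "\<not> evenperm p \<longleftrightarrow> odd (\<Sum>i\<in>{1..Max (ones n)}. bdigit n i)"
      by (intro not_evenperm_xpart_iff_digit_sum) simp_all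
  next
    assume "even n"
    then show "(\<forall>p. p permutes {1..n} \<and> cycle_type n p = xpart n \<longrightarrow> \<not> evenperm p)
        \<and> (\<forall>q. q permutes {1..n} \<and> cycle_type n q = ypart n \<longrightarrow> \<not> evenperm q)
      \<longleftrightarrow> odd (\<Sum>i\<in>{r..Max (ones n)}. bdigit n i) \<and> r \<ge> 2 \<and> even r"
      using assms(1) r_mem r_least by (rule all_odd_xpart_ypart_iff_digit_sum)
  qed
qed

end
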